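(* Let $P$ be the transition matrix of a reversible and ergodic Markov chain on $V=\{1,\dots,N\}$ with stationary distribution $\pi$, and consider any functional-router model for $P$ (any choice of routers $\sigma_v$, $v\in V$) with any initial configuration $\chi^{(0)}$. Then for every $w\in V$, every $T\ge 0$ and every $\gamma$ with $0<\gamma<1/2$, $$\left|\chi^{(T)}_w-\mu^{(T)}_w\right|\le \Psi_\sigma\,\frac{2(1-\gamma)}{1-2\gamma}\,\tau(\gamma)\,\frac{\pi_w}{\pi_{\min}}\,\Delta .$$
   Context: Let $V=\{1,\dots,N\}$ and let $P\in\mathbb{R}_{\ge 0}^{N\times N}$ be a stochastic matrix (entries may be irrational) that is ergodic (irreducible and aperiodic), with unique stationary distribution $\pi$; $\pi_{\min}=\min_{v}\pi_v$. $P$ is reversible if $\pi_uP_{u,v}=\pi_vP_{v,u}$ for all $u,v\in V$. For $v\in V$ let $\mathcal N(v)=\{u\in V: P_{v,u}>0\}$ (which contains $v$ if $P_{v,v}>0$), $\delta(v)=|\mathcal N(v)|$ and $\Delta=\max_v\delta(v)$. The total variation distance is $d_{TV}(\xi,\zeta)=\frac12\|\xi-\zeta\|_1$; the mixing time is $\tau(\varepsilon)=\max_{v\in V}\min\{t\in\mathbb{Z}_{\ge0}: d_{TV}(P^t_{v,\cdot},\pi)\le\varepsilon\}$, where $P^t_{v,\cdot}$ is row $v$ of $P^t$; the mixing rate is $t^*=\tau(1/4)$. A functional-router model consists of functions (routers) $\sigma_v:\mathbb{Z}_{\ge0}\to\mathcal N(v)$ for each $v\in V$. Write $I_{v,u}[z,z')=|\{j\in\{z,\dots,z'-1\}:\sigma_v(j)=u\}|$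 (equal to $0$ if $z'\le z$). Given an initial configuration $\chi^{(0)}\in\mathbb{Z}_{\ge0}^N$ with $\sum_v\chi^{(0)}_v=M$, define recursively $Z^{(t)}_{v,u}=I_{v,u}\big[\sum_{s=0}^{t-1}\chi^{(s)}_v,\ \sum_{s=0}^{t}\chi^{(s)}_v\big)$ and $\chi^{(t+1)}_u=\sum_{v\in V}Z^{(t)}_{v,u}$. Let $\mu^{(0)}=\chi^{(0)}$ and $\mu^{(t)}=\mu^{(0)}P^t$ (row vector times matrix). Define $\Psi_\sigma=\sup_{v\in V,\,u\in\mathcal N(v),\,t\ge0}\big|Z^{(t)}_{v,u}-\chi^{(t)}_vP_{v,u}\big|$. *)

theory Defs
  imports "HOL-Analysis.Analysis"
begin

(* State space V: a finite type 'v (V = UNIV, |V| = N = CARD('v)).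
   Matrices are functions 'v \<Rightarrow> 'v \<Rightarrow> real, distributions/configurations are 'v \<Rightarrow> _ . *)

definition stochastic :: "('v::finite \<Rightarrow> 'v \<Rightarrow> real) \<Rightarrow> bool" where
  "stochastic P \<longleftrightarrow> (\<forall>u v. P u v \<ge> 0) \<and> (\<forall>u. (\<Sum>v\<in>UNIV. P u v) = 1)"

fun matpow :: "('v::finite \<Rightarrow> 'v \<Rightarrow> real) \<Rightarrow> nat \<Rightarrow> 'v \<Rightarrow> 'v \<Rightarrow> real" where
  "matpow P 0 = (\<lambda>u v. if u = v then 1 else 0)"
| "matpow P (Suc t) = (\<lambda>u v. \<Sum>w\<in>UNIV. matpow P t u w * P w v)"

definition irreducible_chain :: "('v::finite \<Rightarrow> 'v \<Rightarrow> real) \<Rightarrow> bool" where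
  "irreducible_chain P \<longleftrightarrow> (\<forall>u v. \<exists>t. matpow P t u v > 0)"

definition aperiodic_chain :: "('v::finite \<Rightarrow> 'v \<Rightarrow> real) \<Rightarrow> bool" where
  "aperiodic_chain P \<longleftrightarrow> (\<forall>v. Gcd {t::nat. t > 0 \<and> matpow P t v v > 0} = 1)"

definition ergodic :: "('v::finite \<Rightarrow> 'v \<Rightarrow> real) \<Rightarrow> bool" where
  "ergodic P \<longleftrightarrow> irreducible_chain P \<and> aperiodic_chain P"

definition stationary_distribution :: "('v::finite \<Rightarrow> 'v \<Rightarrow> real) \<Rightarrow> ('v \<Rightarrow> real) \<Rightarrow> bool" where
  "stationary_distribution P \<pi> \<longleftrightarrow> (\<forall>v. \<pi> v \<ge> 0) \<and> (\<Sum>v\<in>UNIV. \<pi> v) = 1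
      \<and> (\<forall>v. (\<Sum>u\<in>UNIV. \<pi> u * P u v) = \<pi> v)"

definition reversible :: "('v::finite \<Rightarrow> 'v \<Rightarrow> real) \<Rightarrow> ('v \<Rightarrow> real) \<Rightarrow> bool" where
  "reversible P \<pi> \<longleftrightarrow> (\<forall>u v. \<pi> u * P u v = \<pi> v * P v u)"

definition nbhd :: "('v::finite \<Rightarrow> 'v \<Rightarrow> real) \<Rightarrow> 'v \<Rightarrow> 'v set" where
  "nbhd P v = {u. P v u > 0}"

definition max_degree :: "('v::finite \<Rightarrow> 'v \<Rightarrow> real) \<Rightarrow> nat" where
  "max_degree P = Max (range (\<lambda>v. card (nbhd P v)))"

definition pi_min :: "('v::finite \<Rightarrow> real) \<Rightarrow> real" where
  "pi_min \<pi> = Min (range \<pi>)"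

definition dTV :: "('v::finite \<Rightarrow> real) \<Rightarrow> ('v \<Rightarrow> real) \<Rightarrow> real" where
  "dTV \<xi> \<zeta> = (1/2) * (\<Sum>v\<in>UNIV. \<bar>\<xi> v - \<zeta> v\<bar>)"

definition mixing_time :: "('v::finite \<Rightarrow> 'v \<Rightarrow> real) \<Rightarrow> ('v \<Rightarrow> real) \<Rightarrow> real \<Rightarrow> nat" where
  "mixing_time P \<pi> \<epsilon> = Max (range (\<lambda>v. LEAST t. dTV (matpow P t v) \<pi> \<le> \<epsilon>))"

definition Icount :: "('v \<Rightarrow> nat \<Rightarrow> 'v) \<Rightarrow> 'v \<Rightarrow> 'v \<Rightarrow> nat \<Rightarrow> nat \<Rightarrow> nat" where
  "Icount \<sigma> v u z z' = card {j. z \<le> j \<and> j < z' \<and> \<sigma> v j = u}"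

(* router_state \<sigma> \<chi>0 t = (\<chi>^(t), \<lambda>v. \<Sum>_{s<t} \<chi>^(s)_v) *)
fun router_state :: "('v::finite \<Rightarrow> nat \<Rightarrow> 'v) \<Rightarrow> ('v \<Rightarrow> nat) \<Rightarrow> nat \<Rightarrow> ('v \<Rightarrow> nat) \<times> ('v \<Rightarrow> nat)" where
  "router_state \<sigma> \<chi>0 0 = (\<chi>0, (\<lambda>v. 0))"
| "router_state \<sigma> \<chi>0 (Suc t) =
     (let c = fst (router_state \<sigma> \<chi>0 t); S = snd (router_state \<sigma> \<chi>0 t)
      in ((\<lambda>u. \<Sum>v\<in>UNIV. Icount \<sigma> v u (S v) (S v + c v)), (\<lambda>v. S v + c v)))"

definition chi :: "('v::finite \<Rightarrow> nat \<Rightarrow> 'v) \<Rightarrow> ('v \<Rightarrow> nat) \<Rightarrow> nat \<Rightarrow> 'v \<Rightarrow> nat" where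
  "chi \<sigma> \<chi>0 t = fst (router_state \<sigma> \<chi>0 t)"

definition Zflow :: "('v::finite \<Rightarrow> nat \<Rightarrow> 'v) \<Rightarrow> ('v \<Rightarrow> nat) \<Rightarrow> nat \<Rightarrow> 'v \<Rightarrow> 'v \<Rightarrow> nat" where
  "Zflow \<sigma> \<chi>0 t v u = Icount \<sigma> v u (\<Sum>s<t. chi \<sigma> \<chi>0 s v) (\<Sum>s<Suc t. chi \<sigma> \<chi>0 s v)"

definition mu :: "('v::finite \<Rightarrow> 'v \<Rightarrow> real) \<Rightarrow> ('v \<Rightarrow> nat) \<Rightarrow> nat \<Rightarrow> 'v \<Rightarrow> real" where
  "mu P \<chi>0 t w = (\<Sum>v\<in>UNIV. real (\<chi>0 v) * matpow P t v w)"

(* \<Psi>_\<sigma>, as an extended real (the supremum may be +\<infinity>) *)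
definition Psi :: "('v::finite \<Rightarrow> 'v \<Rightarrow> real) \<Rightarrow> ('v \<Rightarrow> nat \<Rightarrow> 'v) \<Rightarrow> ('v \<Rightarrow> nat) \<Rightarrow> ereal" where
  "Psi P \<sigma> \<chi>0 = (SUP (v, u, t) \<in> {(v, u, t). u \<in> nbhd P v}.
      ereal \<bar>real (Zflow \<sigma> \<chi>0 t v u) - real (chi \<sigma> \<chi>0 t v) * P v u\<bar>)"

end

theory Submission
  imports Defs
begin

text \<open>Let \<open>\<xi> s v u = Z\<^sup>(\<^sup>s\<^sup>) v u - \<chi>\<^sup>(\<^sup>s\<^sup>) v * P v u\<close> be the rounding error of the routers.
  Telescoping along \<open>s \<mapsto> \<chi>\<^sup>(\<^sup>s\<^sup>) P\<^sup>T\<^sup>-\<^sup>s\<close> writes \<open>\<chi>\<^sup>(\<^sup>T\<^sup>) w - \<mu>\<^sup>(\<^sup>T\<^sup>) w\<close> as the sum over \<open>s < T\<close> and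
  edges \<open>(v, u)\<close> of \<open>\<xi> s v u * (P\<^sup>T\<^sup>-\<^sup>s\<^sup>-\<^sup>1 u w - \<pi> w)\<close>; the term \<open>\<pi> w\<close> may be inserted because every
  row of \<open>\<xi>\<close> sums to zero. Each \<open>|\<xi>|\<close> is at most \<open>\<Psi>\<^sub>\<sigma>\<close>. Reversibility gives
  \<open>|P\<^sup>t u w - \<pi> w| = \<pi> w / \<pi> u * |P\<^sup>t w u - \<pi> u|\<close>, so the sum over edges at time \<open>t\<close> is at most
  \<open>\<Delta> \<pi> w / \<pi>\<^sub>m\<^sub>i\<^sub>n\<close> times the \<open>\<ell>\<^sub>1\<close>-distance of row \<open>w\<close> of \<open>P\<^sup>t\<close> from \<open>\<pi>\<close>. By Dobrushin's
  contraction argument this distance shrinks by the factor \<open>2\<gamma>\<close> every \<open>\<tau>(\<gamma>)\<close> steps, so its sum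
  over all times is at most \<open>2 \<tau>(\<gamma>) (1 - \<gamma>) / (1 - 2\<gamma>)\<close>.\<close>

section \<open>Powers of a stochastic matrix\<close>

lemma stochastic_nonneg: "stochastic P \<Longrightarrow> P u v \<ge> 0"
  and stochastic_row_sum: "stochastic P \<Longrightarrow> (\<Sum>v\<in>UNIV. P u v) = 1"
  unfolding stochastic_def by auto

lemma matpow_nonneg:
  assumes "stochastic P" shows "matpow P t u v \<ge> 0"
  by (induction t arbitrary: v) (auto intro!: sum_nonneg simp: stochastic_nonneg[OF assms])

lemma matpow_add:
  "matpow P (a + b) u v = (\<Sum>w\<in>UNIV. matpow P a u w * matpow P b w v)"
proof (induction b arbitrary: v)
  case 0
  show ?case by (simp add: if_distrib cong: if_cong)
next
  case (Suc b)
  have "matpow P (a + Suc b) u v = (\<Sum>x\<in>UNIV. (\<Sum>w\<in>UNIV. matpow P a u w * matpow P b w x) * P x v)"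
    using Suc by simp
  also have "\<dots> = (\<Sum>w\<in>UNIV. \<Sum>x\<in>UNIV. matpow P a u w * (matpow P b w x * P x v))"
    by (simp add: sum_distrib_right mult.assoc) (rule sum.swap)
  also have "\<dots> = (\<Sum>w\<in>UNIV. matpow P a u w * matpow P (Suc b) w v)"
    by (simp add: sum_distrib_left)
  finally show ?case .
qed

lemma matpow_Suc_left: "matpow P (Suc t) u v = (\<Sum>w\<in>UNIV. P u w * matpow P t w v)"
proof -
  have "matpow P 1 u w = P u w" for w
  proof -
    have "matpow P 1 u w = (\<Sum>x\<in>UNIV. (if u = x then 1 else 0) * P x w)" by simp
    also have "\<dots> = (\<Sum>x\<in>UNIV. if x = u then P x w else 0)" by (rule sum.cong) auto
    finally show ?thesis by simp
  qed
  then show ?thesis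
    using matpow_add[of P 1 t u v] by simp
qed

lemma matpow_row_sum:
  assumes "stochastic P" shows "(\<Sum>v\<in>UNIV. matpow P t u v) = 1"
proof (induction t arbitrary: u)
  case 0 then show ?case by simp
next
  case (Suc t)
  have "(\<Sum>v\<in>UNIV. matpow P (Suc t) u v) = (\<Sum>w\<in>UNIV. matpow P t u w * (\<Sum>v\<in>UNIV. P w v))"
    by (simp add: sum_distrib_left) (rule sum.swap)
  also have "\<dots> = 1" using Suc stochastic_row_sum[OF assms] by simp
  finally show ?case .
qed

lemma stationary_matpow:
  assumes "stationary_distribution P \<pi>" shows "(\<Sum>u\<in>UNIV. \<pi> u * matpow P t u v) = \<pi> v"
proof (induction t arbitrary: v)
  case 0 then show ?case by (simp add: if_distrib cong: if_cong)
next
  case (Suc t)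
  have "(\<Sum>u\<in>UNIV. \<pi> u * matpow P (Suc t) u v) = (\<Sum>w\<in>UNIV. (\<Sum>u\<in>UNIV. \<pi> u * matpow P t u w) * P w v)"
    by (simp add: sum_distrib_left sum_distrib_right mult.assoc) (rule sum.swap)
  also have "\<dots> = \<pi> v" using Suc assms unfolding stationary_distribution_def by simp
  finally show ?case .
qed

lemma reversible_matpow:
  assumes "reversible P \<pi>" shows "\<pi> u * matpow P t u w = \<pi> w * matpow P t w u"
proof (induction t arbitrary: u w)
  case 0 then show ?case by auto
next
  case (Suc t)
  have "\<pi> u * matpow P (Suc t) u w = (\<Sum>x\<in>UNIV. (\<pi> u * matpow P t u x) * P x w)"
    by (simp add: sum_distrib_left mult.assoc)
  also have "\<dots> = (\<Sum>x\<in>UNIV. matpow P t x u * (\<pi> x * P x w))"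
    using Suc by (simp add: mult_ac)
  also have "\<dots> = (\<Sum>x\<in>UNIV. matpow P t x u * (\<pi> w * P w x))"
    using assms unfolding reversible_def by simp
  also have "\<dots> = \<pi> w * (\<Sum>x\<in>UNIV. P w x * matpow P t x u)"
    by (simp add: sum_distrib_left mult_ac)
  also have "\<dots> = \<pi> w * matpow P (Suc t) w u"
    by (simp only: matpow_Suc_left)
  finally show ?case .
qed

lemma matpow_add_pos:
  assumes "stochastic P" and "matpow P a u x > 0" and "matpow P b x v > 0"
  shows "matpow P (a + b) u v > 0"
proof -
  have "matpow P a u x * matpow P b x v \<le> (\<Sum>y\<in>UNIV. matpow P a u y * matpow P b y v)"
    by (rule member_le_sum) (auto intro: mult_nonneg_nonneg matpow_nonneg[OF assms(1)])
  then show ?thesis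
    unfolding matpow_add using mult_pos_pos[OF assms(2,3)] by linarith
qed

lemma stationary_pos:
  assumes "stochastic P" "irreducible_chain P" "stationary_distribution P \<pi>"
  shows "\<pi> v > 0"
proof -
  have nonneg: "\<pi> x \<ge> 0" for x
    using assms(3) unfolding stationary_distribution_def by auto
  have "(\<Sum>x\<in>UNIV. \<pi> x) = 1"
    using assms(3) unfolding stationary_distribution_def by auto
  then have "\<exists>u. \<pi> u \<noteq> 0"
  proof (rule contrapos_pp)
    assume "\<not> (\<exists>u. \<pi> u \<noteq> 0)"
    then show "(\<Sum>x\<in>UNIV. \<pi> x) \<noteq> 1" by simp
  qed
  then obtain u where "\<pi> u \<noteq> 0" by blast
  with nonneg have u: "\<pi> u > 0" by (simp add: order_less_le)
  obtain t where t: "matpow P t u v > 0"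
    using assms(2) unfolding irreducible_chain_def by blast
  have "\<pi> u * matpow P t u v \<le> (\<Sum>x\<in>UNIV. \<pi> x * matpow P t x v)"
    by (rule member_le_sum) (simp_all add: nonneg matpow_nonneg[OF assms(1)])
  also have "\<dots> = \<pi> v" by (rule stationary_matpow[OF assms(3)])
  finally show ?thesis using mult_pos_pos[OF u t] by linarith
qed

lemma stochastic_matpow: "stochastic P \<Longrightarrow> stochastic (matpow P t)"
  unfolding stochastic_def[of "matpow P t"] by (simp add: matpow_nonneg matpow_row_sum)

lemma pi_min_le: "pi_min \<pi> \<le> \<pi> v"
  unfolding pi_min_def by (rule Min_le) auto

lemma pi_min_pos: "(\<And>v. \<pi> v > 0) \<Longrightarrow> pi_min \<pi> > 0"
  using Min_in[of "range \<pi>"] unfolding pi_min_def by auto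

lemma card_nbhd_le_max_degree: "card (nbhd P v) \<le> max_degree P"
  unfolding max_degree_def by (rule Max_ge) auto

lemma reversible_nbhd_sym:
  assumes "stochastic P" and "reversible P \<pi>" and "\<And>v. \<pi> v > 0"
  shows "u \<in> nbhd P v \<longleftrightarrow> v \<in> nbhd P u"
proof -
  have "P v u > 0 \<longleftrightarrow> \<pi> v * P v u > 0" and "P u v > 0 \<longleftrightarrow> \<pi> u * P u v > 0"
    using assms(3)[of u] assms(3)[of v] by (auto simp: zero_less_mult_iff)
  moreover have "\<pi> v * P v u = \<pi> u * P u v" using assms(2) unfolding reversible_def by simp
  ultimately show ?thesis unfolding nbhd_def by simp
qed

lemma reversible_abs_matpow_centered:
  assumes "reversible P \<pi>" and "\<And>v. \<pi> v > 0"
  shows "\<bar>matpow P t u w - \<pi> w\<bar> = \<pi> w / \<pi> u * \<bar>matpow P t w u - \<pi> u\<bar>"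
proof -
  have "matpow P t u w - \<pi> w = \<pi> w / \<pi> u * (matpow P t w u - \<pi> u)"
    using reversible_matpow[OF assms(1), of u t w] assms(2)[of u]
    by (simp add: field_simps)
  then show ?thesis using assms(2)[of u] assms(2)[of w] by (simp add: abs_mult)
qed

section \<open>Aperiodicity\<close>

lemma add_closed_mult_mem:
  fixes S :: "nat set"
  assumes "0 \<in> S" and "\<And>a b. a \<in> S \<Longrightarrow> b \<in> S \<Longrightarrow> a + b \<in> S" and "x \<in> S"
  shows "k * x \<in> S"
  by (induction k) (use assms in auto)

text \<open>The least positive difference of two elements divides every element, by division with
  remainder; so a Gcd of 1 forces two consecutive elements.\<close>

lemma add_closed_Gcd_one_consecutive:
  fixes S :: "nat set"
  assumes zero: "0 \<in> S" and add: "\<And>a b. a \<in> S \<Longrightarrow> b \<in> S \<Longrightarrow> a + b \<in> S"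
    and gcd: "Gcd S = 1"
  shows "\<exists>b. b \<in> S \<and> b + 1 \<in> S"
proof -
  define D where "D = {d. d > 0 \<and> (\<exists>b\<in>S. b + d \<in> S)}"
  have mult: "x \<in> S \<Longrightarrow> k * x \<in> S" for k x by (rule add_closed_mult_mem[OF zero add])
  have "\<not> S \<subseteq> {0}" using gcd by (simp flip: Gcd_0_iff)
  then obtain s where "s \<in> S" "s \<noteq> 0" by blast
  then have "s \<in> D" unfolding D_def using zero by force
  define d where "d = (LEAST d. d \<in> D)"
  have "d \<in> D" unfolding d_def by (rule LeastI) fact
  then obtain b where b: "b \<in> S" "b + d \<in> S" and d_pos: "d > 0" unfolding D_def by auto
  have "d dvd s" if "s \<in> S" for s
  proof (rule ccontr)
    assume "\<not> d dvd s"
    then have r_pos: "s mod d > 0" by (simp add: dvd_eq_mod_eq_0)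
    have "(s div d) * (b + d) + s mod d = s + (s div d) * b"
      by (simp add: algebra_simps)
    also have "\<dots> \<in> S" using that by (intro add mult b)
    finally have "s mod d \<in> D"
      unfolding D_def using r_pos mult[OF b(2)] by blast
    then have "d \<le> s mod d" unfolding d_def by (rule Least_le)
    with mod_less_divisor[OF d_pos, of s] show False by simp
  qed
  then have "d dvd Gcd S" by (rule Gcd_greatest)
  with gcd b show ?thesis by auto
qed

lemma add_closed_consecutive_contains_large:
  fixes S :: "nat set"
  assumes zero: "0 \<in> S" and add: "\<And>a b. a \<in> S \<Longrightarrow> b \<in> S \<Longrightarrow> a + b \<in> S"
    and b: "b \<in> S" "b + 1 \<in> S" and n: "b * b \<le> n"
  shows "n \<in> S"
proof (cases "b = 0")
  case True
  then show ?thesis using add_closed_mult_mem[OF zero add b(2), of n] by simp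
next
  case False
  have "b * b div b \<le> n div b" using n by (rule div_le_mono)
  then have "b \<le> n div b" using False by simp
  moreover have "n mod b < b" using False by simp
  ultimately have "n mod b \<le> n div b" by linarith
  then have "n = (n div b - n mod b) * b + (n mod b) * (b + 1)"
    by (simp add: algebra_simps diff_mult_distrib) 
  also have "\<dots> \<in> S" by (intro add add_closed_mult_mem[OF zero add] b)
  finally show ?thesis .
qed

lemma aperiodic_matpow_diag_eventually_pos:
  assumes "stochastic P" and "aperiodic_chain P"
  shows "\<exists>n0. \<forall>n\<ge>n0. matpow P n v v > 0"
proof -
  define S where "S = insert 0 {t. t > 0 \<and> matpow P t v v > 0}"
  have add: "a + b \<in> S" if "a \<in> S" "b \<in> S" for a b
  proof (cases "a = 0 \<or> b = 0")
    case False
    with that have "matpow P a v v > 0" "matpow P b v v > 0" unfolding S_def by auto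
    then show ?thesis using False unfolding S_def by (auto intro: matpow_add_pos[OF assms(1)])
  qed (use that in auto)
  have "Gcd S = 1"
    using assms(2) unfolding aperiodic_chain_def S_def by simp
  then obtain b where "b \<in> S" "b + 1 \<in> S"
    using add_closed_Gcd_one_consecutive[of S] add unfolding S_def by blast
  then have "n \<in> S" if "b * b \<le> n" for n
    using that add_closed_consecutive_contains_large[of S] add unfolding S_def by blast
  moreover have "n \<in> S \<Longrightarrow> n \<noteq> 0 \<Longrightarrow> matpow P n v v > 0" for n
    unfolding S_def by simp
  ultimately have "matpow P n v v > 0" if "b * b + 1 \<le> n" for n
    using that by simp
  then show ?thesis by blast
qed

lemma ergodic_matpow_pos:
  assumes "stochastic P" and "ergodic P"
  shows "\<exists>r. \<forall>x y. matpow P r x y > 0"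
proof -
  have "\<forall>v. \<exists>n0. \<forall>n\<ge>n0. matpow P n v v > 0"
    using aperiodic_matpow_diag_eventually_pos[OF assms(1)] assms(2)
    unfolding ergodic_def by blast
  then obtain n0 where n0: "\<forall>v. \<forall>n\<ge>n0 v. matpow P n v v > 0"
    by (auto dest: choice)
  have "\<forall>p. \<exists>t. matpow P t (fst p) (snd p) > 0"
    using assms(2) unfolding ergodic_def irreducible_chain_def by blast
  from choice[OF this] obtain l where l: "\<forall>p. matpow P (l p) (fst p) (snd p) > 0"
    by blast
  define r where "r = Max (range l) + Max (range n0)"
  have "matpow P r x y > 0" for x y
  proof -
    have "l (x, y) \<le> Max (range l)" and "n0 y \<le> Max (range n0)"
      by (auto intro!: Max_ge)
    then have r: "r = l (x, y) + (r - l (x, y))" and "n0 y \<le> r - l (x, y)"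
      unfolding r_def by linarith+
    then have "matpow P (r - l (x, y)) y y > 0" using n0 by blast
    then have "matpow P (l (x, y) + (r - l (x, y))) x y > 0"
      using l matpow_add_pos[OF assms(1)] by (metis fst_conv snd_conv)
    then show ?thesis using r by simp
  qed
  then show ?thesis by blast
qed

section \<open>Convergence to the stationary distribution\<close>

lemma zero_sum_pairwise_decomposition:
  fixes \<eta> :: "'v::finite \<Rightarrow> real"
  assumes "(\<Sum>x\<in>UNIV. \<eta> x) = 0"
  shows "(\<Sum>x\<in>UNIV. max (\<eta> x) 0) * (\<Sum>x\<in>UNIV. \<eta> x * Q x z)
    = (\<Sum>x\<in>UNIV. \<Sum>y\<in>UNIV. max (\<eta> x) 0 * max (- \<eta> y) 0 * (Q x z - Q y z))"
proof -
  define p where "p x = max (\<eta> x) 0" for x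
  define n where "n x = max (- \<eta> x) 0" for x
  have \<eta>: "\<eta> x = p x - n x" for x unfolding p_def n_def by auto
  have n_sum: "(\<Sum>y\<in>UNIV. n y) = (\<Sum>x\<in>UNIV. p x)"
    using assms unfolding \<eta> by (simp add: sum_subtractf)
  have "(\<Sum>x\<in>UNIV. \<Sum>y\<in>UNIV. p x * n y * (Q x z - Q y z))
      = (\<Sum>x\<in>UNIV. p x * Q x z) * (\<Sum>y\<in>UNIV. n y) - (\<Sum>x\<in>UNIV. p x) * (\<Sum>y\<in>UNIV. n y * Q y z)"
    by (simp add: sum_product right_diff_distrib sum_subtractf mult_ac) (rule sum.swap)
  also have "\<dots> = (\<Sum>x\<in>UNIV. p x) * (\<Sum>x\<in>UNIV. \<eta> x * Q x z)"
    by (simp add: n_sum \<eta> left_diff_distrib sum_subtractf right_diff_distrib mult_ac)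
  finally show ?thesis unfolding p_def n_def ..
qed

lemma sum_abs_pairwise_diff_le:
  fixes Q :: "'v::finite \<Rightarrow> 'v \<Rightarrow> real"
  assumes rows: "\<And>x y. (\<Sum>z\<in>UNIV. \<bar>Q x z - Q y z\<bar>) \<le> 2 * c"
    and "\<And>x. p x \<ge> 0" and "\<And>y. n y \<ge> 0"
  shows "(\<Sum>z\<in>UNIV. \<bar>\<Sum>x\<in>UNIV. \<Sum>y\<in>UNIV. p x * n y * (Q x z - Q y z)\<bar>)
    \<le> 2 * c * (\<Sum>x\<in>UNIV. p x) * (\<Sum>y\<in>UNIV. n y)"
proof -
  have "(\<Sum>z\<in>UNIV. \<bar>\<Sum>x\<in>UNIV. \<Sum>y\<in>UNIV. p x * n y * (Q x z - Q y z)\<bar>)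
      \<le> (\<Sum>z\<in>UNIV. \<Sum>x\<in>UNIV. \<Sum>y\<in>UNIV. p x * n y * \<bar>Q x z - Q y z\<bar>)"
    by (intro sum_mono order_trans[OF sum_abs]) (simp add: abs_mult assms(2,3))
  also have "\<dots> = (\<Sum>x\<in>UNIV. \<Sum>z\<in>UNIV. \<Sum>y\<in>UNIV. p x * n y * \<bar>Q x z - Q y z\<bar>)"
    by (rule sum.swap)
  also have "\<dots> = (\<Sum>x\<in>UNIV. \<Sum>y\<in>UNIV. p x * n y * (\<Sum>z\<in>UNIV. \<bar>Q x z - Q y z\<bar>))"
    by (rule sum.cong[OF refl], subst sum.swap) (simp add: sum_distrib_left)
  also have "\<dots> \<le> (\<Sum>x\<in>UNIV. \<Sum>y\<in>UNIV. p x * n y * (2 * c))"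
    by (intro sum_mono mult_left_mono rows) (simp add: assms(2,3))
  also have "\<dots> = 2 * c * (\<Sum>x\<in>UNIV. p x) * (\<Sum>y\<in>UNIV. n y)"
    by (simp add: sum_distrib_right[symmetric] sum_distrib_left[symmetric] mult_ac)
  finally show ?thesis .
qed

lemma l1_contraction:
  fixes Q :: "'v::finite \<Rightarrow> 'v \<Rightarrow> real" and \<eta> :: "'v \<Rightarrow> real"
  assumes rows: "\<And>x y. (\<Sum>z\<in>UNIV. \<bar>Q x z - Q y z\<bar>) \<le> 2 * c"
    and mass: "(\<Sum>x\<in>UNIV. \<eta> x) = 0"
  shows "(\<Sum>z\<in>UNIV. \<bar>\<Sum>x\<in>UNIV. \<eta> x * Q x z\<bar>) \<le> c * (\<Sum>x\<in>UNIV. \<bar>\<eta> x\<bar>)"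
proof -
  define p where "p x = max (\<eta> x) 0" for x
  define n where "n x = max (- \<eta> x) 0" for x
  define m where "m = (\<Sum>x\<in>UNIV. p x)"
  have pn_nonneg: "p x \<ge> 0" "n x \<ge> 0" for x unfolding p_def n_def by auto
  have "\<eta> x = p x - n x" for x unfolding p_def n_def by auto
  then have n_sum: "(\<Sum>y\<in>UNIV. n y) = m"
    using mass unfolding m_def by (simp add: sum_subtractf)
  have "\<bar>\<eta> x\<bar> = p x + n x" for x unfolding p_def n_def by auto
  then have l1: "(\<Sum>x\<in>UNIV. \<bar>\<eta> x\<bar>) = 2 * m"
    using n_sum unfolding m_def by (simp add: sum.distrib)
  have m_nonneg: "m \<ge> 0" unfolding m_def by (simp add: sum_nonneg pn_nonneg)
  have "m * (\<Sum>z\<in>UNIV. \<bar>\<Sum>x\<in>UNIV. \<eta> x * Q x z\<bar>)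
      = (\<Sum>z\<in>UNIV. \<bar>m * (\<Sum>x\<in>UNIV. \<eta> x * Q x z)\<bar>)"
    using m_nonneg by (simp add: sum_distrib_left[of m "\<lambda>z. \<bar>_ z\<bar>"] abs_mult)
  also have "\<dots> = (\<Sum>z\<in>UNIV. \<bar>\<Sum>x\<in>UNIV. \<Sum>y\<in>UNIV. p x * n y * (Q x z - Q y z)\<bar>)"
    unfolding m_def p_def n_def zero_sum_pairwise_decomposition[OF mass] ..
  also have "\<dots> \<le> m * (c * (\<Sum>x\<in>UNIV. \<bar>\<eta> x\<bar>))"
    using sum_abs_pairwise_diff_le[of Q c p n, OF rows pn_nonneg]
    by (simp add: l1 n_sum m_def[symmetric] mult_ac)
  finally have scaled: "m * (\<Sum>z\<in>UNIV. \<bar>\<Sum>x\<in>UNIV. \<eta> x * Q x z\<bar>) \<le> m * (c * (\<Sum>x\<in>UNIV. \<bar>\<eta> x\<bar>))" .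
  show ?thesis
  proof (cases "m = 0")
    case True
    then have "\<eta> x = 0" for x using l1 by (simp add: sum_nonneg_eq_0_iff)
    then show ?thesis by simp
  next
    case False
    with m_nonneg scaled show ?thesis by (simp add: mult_le_cancel_left_pos)
  qed
qed

lemma stochastic_rows_l1_dist_le:
  assumes "stochastic Q" and "\<And>x. \<epsilon> \<le> Q x z0"
  shows "(\<Sum>z\<in>UNIV. \<bar>Q x z - Q y z\<bar>) \<le> 2 * (1 - \<epsilon>)"
proof -
  have "\<bar>Q x z - Q y z\<bar> = Q x z + Q y z - 2 * min (Q x z) (Q y z)" for z by auto
  then have "(\<Sum>z\<in>UNIV. \<bar>Q x z - Q y z\<bar>) = 2 - 2 * (\<Sum>z\<in>UNIV. min (Q x z) (Q y z))"
    using stochastic_row_sum[OF assms(1)]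
    by (simp add: sum.distrib sum_subtractf sum_distrib_left)
  moreover have "\<epsilon> \<le> (\<Sum>z\<in>UNIV. min (Q x z) (Q y z))"
    using assms(2)[of x] assms(2)[of y]
      member_le_sum[of z0 UNIV "\<lambda>z. min (Q x z) (Q y z)"] stochastic_nonneg[OF assms(1)]
    by force
  ultimately show ?thesis by simp
qed

lemma stochastic_rows_l1_dist_le_two:
  assumes "stochastic Q"
  shows "(\<Sum>z\<in>UNIV. \<bar>Q x z - Q y z\<bar>) \<le> 2"
  using stochastic_rows_l1_dist_le[OF assms, of 0] stochastic_nonneg[OF assms] by simp

definition l1_dist_stationary :: "('v::finite \<Rightarrow> 'v \<Rightarrow> real) \<Rightarrow> ('v \<Rightarrow> real) \<Rightarrow> nat \<Rightarrow> 'v \<Rightarrow> real"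
  where "l1_dist_stationary P \<pi> t v = (\<Sum>u\<in>UNIV. \<bar>matpow P t v u - \<pi> u\<bar>)"

lemma dTV_matpow_eq: "dTV (matpow P t v) \<pi> = l1_dist_stationary P \<pi> t v / 2"
  unfolding dTV_def l1_dist_stationary_def by simp

lemma l1_dist_stationary_nonneg: "l1_dist_stationary P \<pi> t v \<ge> 0"
  unfolding l1_dist_stationary_def by (simp add: sum_nonneg)

lemma l1_dist_stationary_le_two:
  assumes "stochastic P" and "stationary_distribution P \<pi>"
  shows "l1_dist_stationary P \<pi> t v \<le> 2"
proof -
  have "\<pi> u \<ge> 0" for u
    using assms(2) unfolding stationary_distribution_def by auto
  moreover have "(\<Sum>u\<in>UNIV. \<pi> u) = 1"
    using assms(2) unfolding stationary_distribution_def by auto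
  ultimately show ?thesis
    using sum_mono[of UNIV "\<lambda>u. \<bar>matpow P t v u - \<pi> u\<bar>" "\<lambda>u. matpow P t v u + \<pi> u"]
      matpow_nonneg[OF assms(1)]
    by (simp add: l1_dist_stationary_def sum.distrib matpow_row_sum[OF assms(1)] abs_le_iff)
qed

lemma l1_dist_stationary_add_le:
  assumes "stochastic P" and "stationary_distribution P \<pi>"
    and rows: "\<And>x y. (\<Sum>z\<in>UNIV. \<bar>matpow P s x z - matpow P s y z\<bar>) \<le> 2 * c"
  shows "l1_dist_stationary P \<pi> (t + s) v \<le> c * l1_dist_stationary P \<pi> t v"
proof -
  define \<eta> where "\<eta> x = matpow P t v x - \<pi> x" for x
  have "(\<Sum>x\<in>UNIV. \<pi> x) = 1" using assms(2) unfolding stationary_distribution_def by simp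
  then have mass: "(\<Sum>x\<in>UNIV. \<eta> x) = 0"
    unfolding \<eta>_def by (simp add: sum_subtractf matpow_row_sum[OF assms(1)])
  have "(\<Sum>x\<in>UNIV. \<eta> x * matpow P s x z) = matpow P (t + s) v z - \<pi> z" for z
    unfolding \<eta>_def
    by (simp add: left_diff_distrib sum_subtractf matpow_add stationary_matpow[OF assms(2)])
  then show ?thesis
    using l1_contraction[of "matpow P s" c \<eta>, OF rows mass]
    unfolding l1_dist_stationary_def \<eta>_def by simp
qed

lemma l1_dist_stationary_antimono:
  assumes "stochastic P" and "stationary_distribution P \<pi>" and "t \<le> t'"
  shows "l1_dist_stationary P \<pi> t' v \<le> l1_dist_stationary P \<pi> t v"
  using assms(3)
proof (induction t' rule: dec_induct)
  case (step n)
  have "l1_dist_stationary P \<pi> (n + 1) v \<le> 1 * l1_dist_stationary P \<pi> n v"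
    using stochastic_rows_l1_dist_le_two[OF stochastic_matpow[OF assms(1)], of 1]
    by (intro l1_dist_stationary_add_le assms(1,2)) simp
  then show ?case using step by simp
qed simp

lemma ergodic_l1_dist_stationary_eventually_small:
  assumes "stochastic P" and "ergodic P" and "stationary_distribution P \<pi>" and "\<delta> > 0"
  shows "\<exists>t. l1_dist_stationary P \<pi> t v \<le> \<delta>"
proof -
  obtain r where r: "\<And>x y. matpow P r x y > 0" using ergodic_matpow_pos[OF assms(1,2)] by blast
  fix z0 :: 'a
  define \<epsilon> where "\<epsilon> = Min (range (\<lambda>x. matpow P r x z0))"
  have "\<epsilon> \<in> range (\<lambda>x. matpow P r x z0)" unfolding \<epsilon>_def by (rule Min_in) auto
  then have \<epsilon>_pos: "\<epsilon> > 0" using r by auto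
  have rows: "(\<Sum>z\<in>UNIV. \<bar>matpow P r x z - matpow P r y z\<bar>) \<le> 2 * (1 - \<epsilon>)" for x y
    using stochastic_rows_l1_dist_le[OF stochastic_matpow[OF assms(1), of r], of \<epsilon> z0]
    unfolding \<epsilon>_def by (simp add: Min_le)
  have "1 - \<epsilon> \<ge> 0" using rows[of z0 z0] by simp
  have decay: "l1_dist_stationary P \<pi> (k * r) v \<le> 2 * (1 - \<epsilon>) ^ k" for k
  proof (induction k)
    case 0 then show ?case using l1_dist_stationary_le_two[OF assms(1,3)] by simp
  next
    case (Suc k)
    have "l1_dist_stationary P \<pi> (k * r + r) v \<le> (1 - \<epsilon>) * l1_dist_stationary P \<pi> (k * r) v"
      by (rule l1_dist_stationary_add_le[OF assms(1,3) rows])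
    also have "\<dots> \<le> (1 - \<epsilon>) * (2 * (1 - \<epsilon>) ^ k)"
      by (rule mult_left_mono[OF Suc \<open>1 - \<epsilon> \<ge> 0\<close>])
    finally show ?case by (simp add: add.commute mult_ac)
  qed
  obtain k where "(1 - \<epsilon>) ^ k < \<delta> / 2"
    using real_arch_pow_inv[of "\<delta> / 2" "1 - \<epsilon>"] \<epsilon>_pos assms(4) by auto
  then show ?thesis using decay[of k] by (intro exI[of _ "k * r"]) simp
qed

section \<open>Mixing time\<close>

lemma sum_lessThan_add:
  fixes f :: "nat \<Rightarrow> 'a::comm_monoid_add"
  shows "(\<Sum>i<m + n. f i) = (\<Sum>i<m. f i) + (\<Sum>i<n. f (m + i))"
  by (induction n) (simp_all add: add.assoc)

context
  fixes P :: "'v::finite \<Rightarrow> 'v \<Rightarrow> real" and \<pi> :: "'v \<Rightarrow> real" and \<gamma> :: real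
  assumes stochastic: "stochastic P" and ergodic: "ergodic P"
    and stationary: "stationary_distribution P \<pi>"
    and \<gamma>_pos: "0 < \<gamma>" and \<gamma>_less: "\<gamma> < 1/2"
begin

lemma l1_dist_stationary_mixing_time: "l1_dist_stationary P \<pi> (mixing_time P \<pi> \<gamma>) v \<le> 2 * \<gamma>"
proof -
  define t where "t = (LEAST t. dTV (matpow P t v) \<pi> \<le> \<gamma>)"
  have "\<exists>t. dTV (matpow P t v) \<pi> \<le> \<gamma>"
    using ergodic_l1_dist_stationary_eventually_small[OF stochastic ergodic stationary, of "2 * \<gamma>"] \<gamma>_pos
    by (simp add: dTV_matpow_eq mult.commute)
  then have "dTV (matpow P t v) \<pi> \<le> \<gamma>"
    unfolding t_def by (rule LeastI_ex)
  moreover have "t \<le> mixing_time P \<pi> \<gamma>"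
    unfolding mixing_time_def t_def by (rule Max_ge) auto
  ultimately show ?thesis
    using l1_dist_stationary_antimono[OF stochastic stationary, where t = t and t' = "mixing_time P \<pi> \<gamma>" and v = v]
    by (simp add: dTV_matpow_eq)
qed

lemma l1_dist_stationary_add_mixing_time:
  "l1_dist_stationary P \<pi> (t + mixing_time P \<pi> \<gamma>) v \<le> 2 * \<gamma> * l1_dist_stationary P \<pi> t v"
proof (rule l1_dist_stationary_add_le[OF stochastic stationary])
  fix x y
  let ?\<tau> = "mixing_time P \<pi> \<gamma>"
  have "(\<Sum>z\<in>UNIV. \<bar>matpow P ?\<tau> x z - matpow P ?\<tau> y z\<bar>)
     \<le> l1_dist_stationary P \<pi> ?\<tau> x + l1_dist_stationary P \<pi> ?\<tau> y"
    unfolding l1_dist_stationary_def sum.distrib[symmetric] by (rule sum_mono) simp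
  then show "(\<Sum>z\<in>UNIV. \<bar>matpow P ?\<tau> x z - matpow P ?\<tau> y z\<bar>) \<le> 2 * (2 * \<gamma>)"
    using l1_dist_stationary_mixing_time[of x] l1_dist_stationary_mixing_time[of y] by simp
qed

lemma l1_dist_stationary_geometric_decay:
  assumes "Suc K * mixing_time P \<pi> \<gamma> \<le> t"
  shows "l1_dist_stationary P \<pi> t v \<le> (2 * \<gamma>) ^ Suc K"
  using assms
proof (induction K arbitrary: t)
  case 0
  then have "mixing_time P \<pi> \<gamma> \<le> t" by simp
  then show ?case
    using l1_dist_stationary_antimono[OF stochastic stationary, where t = "mixing_time P \<pi> \<gamma>" and t' = t and v = v]
      l1_dist_stationary_mixing_time[of v]
    by simp
next
  case (Suc K)
  let ?\<tau> = "mixing_time P \<pi> \<gamma>"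
  have "l1_dist_stationary P \<pi> (t - ?\<tau> + ?\<tau>) v \<le> 2 * \<gamma> * l1_dist_stationary P \<pi> (t - ?\<tau>) v"
    by (rule l1_dist_stationary_add_mixing_time)
  also have "\<dots> \<le> 2 * \<gamma> * (2 * \<gamma>) ^ Suc K"
    using Suc \<gamma>_pos by (intro mult_left_mono Suc.IH) auto
  finally show ?case using Suc.prems by simp
qed

lemma sum_l1_dist_stationary_blocks_le:
  "(\<Sum>t<mixing_time P \<pi> \<gamma> + K * mixing_time P \<pi> \<gamma>. l1_dist_stationary P \<pi> t v)
    \<le> 2 * mixing_time P \<pi> \<gamma> + mixing_time P \<pi> \<gamma> * (\<Sum>k<K. (2 * \<gamma>) ^ Suc k)"
proof (induction K)
  case 0
  show ?case
    using sum_mono[of "{..<mixing_time P \<pi> \<gamma>}" "\<lambda>t. l1_dist_stationary P \<pi> t v" "\<lambda>_. 2"]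
      l1_dist_stationary_le_two[OF stochastic stationary] by simp
next
  case (Suc K)
  let ?\<tau> = "mixing_time P \<pi> \<gamma>"
  have "(\<Sum>t<?\<tau> + Suc K * ?\<tau>. l1_dist_stationary P \<pi> t v)
      = (\<Sum>t<?\<tau> + K * ?\<tau>. l1_dist_stationary P \<pi> t v)
        + (\<Sum>i<?\<tau>. l1_dist_stationary P \<pi> (?\<tau> + K * ?\<tau> + i) v)"
    using sum_lessThan_add[where m = "?\<tau> + K * ?\<tau>" and n = ?\<tau>] by (simp add: add_ac)
  also have "\<dots> \<le> (2 * ?\<tau> + ?\<tau> * (\<Sum>k<K. (2 * \<gamma>) ^ Suc k)) + (\<Sum>i<?\<tau>. (2 * \<gamma>) ^ Suc K)"
    by (intro add_mono Suc.IH sum_mono l1_dist_stationary_geometric_decay) simp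
  also have "\<dots> = 2 * ?\<tau> + ?\<tau> * (\<Sum>k<Suc K. (2 * \<gamma>) ^ Suc k)"
    by (simp add: algebra_simps)
  finally show ?case .
qed

text \<open>The first block of \<open>\<tau>\<close> steps contributes at most \<open>2\<tau>\<close>, the \<open>k\<close>-th one at most \<open>\<tau> (2\<gamma>)\<^sup>k\<close>,
  and \<open>2\<tau> + \<tau> 2\<gamma> / (1 - 2\<gamma>) = 2\<tau> (1 - \<gamma>) / (1 - 2\<gamma>)\<close>.\<close>

lemma sum_l1_dist_stationary_le:
  "(\<Sum>t<T. l1_dist_stationary P \<pi> t v) \<le> 2 * real (mixing_time P \<pi> \<gamma>) * (1 - \<gamma>) / (1 - 2 * \<gamma>)"
proof (cases "mixing_time P \<pi> \<gamma> = 0")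
  case True
  have "l1_dist_stationary P \<pi> t v = 0" for t
    using l1_dist_stationary_add_mixing_time[of t v] l1_dist_stationary_nonneg[of P \<pi> t v] \<gamma>_less
    unfolding True by (simp add: mult_le_cancel_right1)
  then show ?thesis using True by simp
next
  case False
  let ?\<tau> = "mixing_time P \<pi> \<gamma>"
  have "(\<Sum>k<T. (2 * \<gamma>) ^ Suc k) = 2 * \<gamma> * (1 - (2 * \<gamma>) ^ T) / (1 - 2 * \<gamma>)"
    using \<gamma>_less sum_gp_strict[of "2 * \<gamma>" T] by (simp add: sum_distrib_left[symmetric])
  also have "\<dots> \<le> 2 * \<gamma> / (1 - 2 * \<gamma>)"
    using \<gamma>_pos \<gamma>_less by (intro divide_right_mono) auto
  finally have geometric: "(\<Sum>k<T. (2 * \<gamma>) ^ Suc k) \<le> 2 * \<gamma> / (1 - 2 * \<gamma>)" .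
  have "T \<le> T * ?\<tau>" using False by simp
  then have "T \<le> ?\<tau> + T * ?\<tau>" by linarith
  then have "(\<Sum>t<T. l1_dist_stationary P \<pi> t v) \<le> (\<Sum>t<?\<tau> + T * ?\<tau>. l1_dist_stationary P \<pi> t v)"
    by (intro sum_mono2) (auto simp: l1_dist_stationary_nonneg)
  also have "\<dots> \<le> 2 * ?\<tau> + ?\<tau> * (2 * \<gamma> / (1 - 2 * \<gamma>))"
    using sum_l1_dist_stationary_blocks_le[where K = T and v = v] mult_left_mono[OF geometric, of "real ?\<tau>"] by simp
  also have "\<dots> = 2 * real ?\<tau> * (1 - \<gamma>) / (1 - 2 * \<gamma>)"
    using \<gamma>_less by (simp add: field_simps)
  finally show ?thesis .
qed

end

section \<open>The functional-router model\<close>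

lemma router_state_snd: "snd (router_state \<sigma> \<chi>0 t) = (\<lambda>v. \<Sum>s<t. chi \<sigma> \<chi>0 s v)"
  by (induction t) (simp_all add: Let_def chi_def)

lemma chi_0: "chi \<sigma> \<chi>0 0 = \<chi>0"
  by (simp add: chi_def)

lemma chi_Suc: "chi \<sigma> \<chi>0 (Suc t) u = (\<Sum>v\<in>UNIV. Zflow \<sigma> \<chi>0 t v u)"
  using router_state_snd[of \<sigma> \<chi>0 t] by (simp add: chi_def Zflow_def Let_def)

lemma sum_Icount:
  fixes \<sigma> :: "'v::finite \<Rightarrow> nat \<Rightarrow> 'v"
  shows "(\<Sum>u\<in>UNIV. Icount \<sigma> v u a b) = b - a"
proof -
  have "Icount \<sigma> v u a b = card {j\<in>{a..<b}. \<sigma> v j = u}" for u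
    unfolding Icount_def by (rule arg_cong[where f = card]) auto
  then have "(\<Sum>u\<in>UNIV. Icount \<sigma> v u a b) = card (\<Union>u. {j\<in>{a..<b}. \<sigma> v j = u})"
    by (subst card_UN_disjoint) auto
  also have "(\<Union>u. {j\<in>{a..<b}. \<sigma> v j = u}) = {a..<b}" by auto
  finally show ?thesis by simp
qed

lemma sum_Zflow: "(\<Sum>u\<in>UNIV. Zflow \<sigma> \<chi>0 t v u) = chi \<sigma> \<chi>0 t v"
  unfolding Zflow_def sum_Icount by simp

lemma Zflow_outside_nbhd:
  assumes "\<And>j. \<sigma> v j \<in> nbhd P v" and "u \<notin> nbhd P v"
  shows "Zflow \<sigma> \<chi>0 t v u = 0"
proof -
  have "{j. a \<le> j \<and> j < b \<and> \<sigma> v j = u} = {}" for a b using assms by auto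
  then show ?thesis unfolding Zflow_def Icount_def by simp
qed

definition routing_error :: "('v::finite \<Rightarrow> 'v \<Rightarrow> real) \<Rightarrow> ('v \<Rightarrow> nat \<Rightarrow> 'v) \<Rightarrow> ('v \<Rightarrow> nat)
    \<Rightarrow> nat \<Rightarrow> 'v \<Rightarrow> 'v \<Rightarrow> real" where
  "routing_error P \<sigma> \<chi>0 t v u = real (Zflow \<sigma> \<chi>0 t v u) - real (chi \<sigma> \<chi>0 t v) * P v u"

lemma chi_Suc_eq_routing_error:
  "real (chi \<sigma> \<chi>0 (Suc t) u)
    = (\<Sum>v\<in>UNIV. routing_error P \<sigma> \<chi>0 t v u) + (\<Sum>v\<in>UNIV. real (chi \<sigma> \<chi>0 t v) * P v u)"
  unfolding routing_error_def chi_Suc by (simp add: sum_subtractf)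

lemma sum_routing_error:
  assumes "stochastic P"
  shows "(\<Sum>u\<in>UNIV. routing_error P \<sigma> \<chi>0 t v u) = 0"
  using sum_Zflow[of \<sigma> \<chi>0 t v] stochastic_row_sum[OF assms, of v]
  unfolding routing_error_def
  by (simp add: sum_subtractf flip: sum_distrib_left of_nat_sum)

lemma routing_error_outside_nbhd:
  assumes "stochastic P" and "\<And>j. \<sigma> v j \<in> nbhd P v" and "u \<notin> nbhd P v"
  shows "routing_error P \<sigma> \<chi>0 t v u = 0"
proof -
  have "P v u = 0" using assms(3) stochastic_nonneg[OF assms(1), of v u] by (simp add: nbhd_def)
  then show ?thesis
    unfolding routing_error_def using Zflow_outside_nbhd[of \<sigma> v P u] assms(2,3) by simp
qed

lemma abs_routing_error_le_Psi:
  assumes "u \<in> nbhd P v"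
  shows "ereal \<bar>routing_error P \<sigma> \<chi>0 t v u\<bar> \<le> Psi P \<sigma> \<chi>0"
  unfolding Psi_def routing_error_def
  by (rule SUP_upper2[of "(v, u, t)"]) (use assms in auto)

lemma Psi_nonneg:
  assumes "stochastic P"
  shows "0 \<le> Psi P \<sigma> \<chi>0"
proof -
  fix v
  have "\<exists>u. P v u > 0"
  proof (rule ccontr)
    assume "\<not> (\<exists>u. P v u > 0)"
    then have "(\<Sum>u\<in>UNIV. P v u) \<le> 0" by (intro sum_nonpos) (simp add: not_less)
    then show False using stochastic_row_sum[OF assms, of v] by simp
  qed
  then obtain u where "u \<in> nbhd P v" unfolding nbhd_def by blast
  then have "ereal \<bar>routing_error P \<sigma> \<chi>0 0 v u\<bar> \<le> Psi P \<sigma> \<chi>0"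
    by (rule abs_routing_error_le_Psi)
  then show ?thesis by (rule order_trans[rotated]) simp
qed

lemma chi_minus_mu_eq:
  "real (chi \<sigma> \<chi>0 T w) - mu P \<chi>0 T w
    = (\<Sum>s<T. \<Sum>v\<in>UNIV. \<Sum>u\<in>UNIV. routing_error P \<sigma> \<chi>0 s v u * matpow P (T - Suc s) u w)"
proof -
  define f where "f s = (\<Sum>u\<in>UNIV. real (chi \<sigma> \<chi>0 s u) * matpow P (T - s) u w)" for s
  have step: "f (Suc s) - f s
      = (\<Sum>v\<in>UNIV. \<Sum>u\<in>UNIV. routing_error P \<sigma> \<chi>0 s v u * matpow P (T - Suc s) u w)"
    if "s < T" for s
  proof -
    have T: "T - s = Suc (T - Suc s)" using that by simp
    have "f s = (\<Sum>u\<in>UNIV. (\<Sum>x\<in>UNIV. real (chi \<sigma> \<chi>0 s x) * P x u) * matpow P (T - Suc s) u w)"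
      unfolding f_def T matpow_Suc_left
      by (simp add: sum_distrib_left sum_distrib_right mult.assoc) (rule sum.swap)
    moreover have "f (Suc s) = (\<Sum>u\<in>UNIV. ((\<Sum>v\<in>UNIV. routing_error P \<sigma> \<chi>0 s v u)
        + (\<Sum>x\<in>UNIV. real (chi \<sigma> \<chi>0 s x) * P x u)) * matpow P (T - Suc s) u w)"
      unfolding f_def chi_Suc_eq_routing_error[where P = P] by simp
    ultimately have "f (Suc s) - f s
        = (\<Sum>u\<in>UNIV. (\<Sum>v\<in>UNIV. routing_error P \<sigma> \<chi>0 s v u) * matpow P (T - Suc s) u w)"
      by (simp add: distrib_right sum.distrib)
    then show ?thesis by (simp add: sum_distrib_right) (rule sum.swap)
  qed
  have "f T = real (chi \<sigma> \<chi>0 T w)" unfolding f_def by (simp add: if_distrib cong: if_cong)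
  moreover have "f 0 = mu P \<chi>0 T w" unfolding f_def mu_def chi_0 by simp
  ultimately have "real (chi \<sigma> \<chi>0 T w) - mu P \<chi>0 T w = (\<Sum>s<T. f (Suc s) - f s)"
    by (simp add: sum_lessThan_telescope)
  then show ?thesis by (simp add: step)
qed

lemma chi_minus_mu_eq_centered:
  assumes "stochastic P"
  shows "real (chi \<sigma> \<chi>0 T w) - mu P \<chi>0 T w
    = (\<Sum>s<T. \<Sum>v\<in>UNIV. \<Sum>u\<in>UNIV. routing_error P \<sigma> \<chi>0 s v u * (matpow P (T - Suc s) u w - q))"
  unfolding chi_minus_mu_eq right_diff_distrib sum_subtractf
  by (simp add: sum_distrib_right[symmetric] sum_routing_error[OF assms])

lemma abs_chi_minus_mu_le:
  assumes "stochastic P" and "\<And>v j. \<sigma> v j \<in> nbhd P v"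
  shows "\<bar>real (chi \<sigma> \<chi>0 T w) - mu P \<chi>0 T w\<bar>
    \<le> (\<Sum>s<T. \<Sum>v\<in>UNIV. \<Sum>u\<in>nbhd P v.
          \<bar>routing_error P \<sigma> \<chi>0 s v u\<bar> * \<bar>matpow P (T - Suc s) u w - q\<bar>)"
proof -
  let ?x = "\<lambda>s v u. routing_error P \<sigma> \<chi>0 s v u * (matpow P (T - Suc s) u w - q)"
  have "\<bar>real (chi \<sigma> \<chi>0 T w) - mu P \<chi>0 T w\<bar> \<le> (\<Sum>s<T. \<bar>\<Sum>v\<in>UNIV. \<Sum>u\<in>UNIV. ?x s v u\<bar>)"
    unfolding chi_minus_mu_eq_centered[OF assms(1), where q = q] by (rule sum_abs)
  also have "\<dots> \<le> (\<Sum>s<T. \<Sum>v\<in>UNIV. \<Sum>u\<in>UNIV. \<bar>?x s v u\<bar>)"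
    by (intro sum_mono order_trans[OF sum_abs] sum_abs)
  also have "\<dots> = (\<Sum>s<T. \<Sum>v\<in>UNIV. \<Sum>u\<in>nbhd P v.
      \<bar>routing_error P \<sigma> \<chi>0 s v u\<bar> * \<bar>matpow P (T - Suc s) u w - q\<bar>)"
  proof -
    have "\<bar>?x s v u\<bar> = (if u \<in> nbhd P v
        then \<bar>routing_error P \<sigma> \<chi>0 s v u\<bar> * \<bar>matpow P (T - Suc s) u w - q\<bar> else 0)" for s v u
      using routing_error_outside_nbhd[OF assms(1), of \<sigma> v u] assms(2) by (simp add: abs_mult)
    then show ?thesis by (simp add: sum.If_cases)
  qed
  finally show ?thesis .
qed

section \<open>The discrepancy bound\<close>

lemma reversible_sum_nbhd_eq:
  fixes f :: "'v::finite \<Rightarrow> real"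
  assumes "stochastic P" and "reversible P \<pi>" and "\<And>v. \<pi> v > 0"
  shows "(\<Sum>v\<in>UNIV. \<Sum>u\<in>nbhd P v. f u) = (\<Sum>u\<in>UNIV. real (card (nbhd P u)) * f u)"
proof -
  have "{v. u \<in> nbhd P v} = nbhd P u" for u
  proof (rule set_eqI)
    fix v
    show "v \<in> {v. u \<in> nbhd P v} \<longleftrightarrow> v \<in> nbhd P u"
      using reversible_nbhd_sym[OF assms, of u v] by simp
  qed
  then have "(\<Sum>u\<in>UNIV. \<Sum>v\<in>UNIV. if u \<in> nbhd P v then f u else 0)
      = (\<Sum>u\<in>UNIV. \<Sum>v\<in>nbhd P u. f u)"
    by (simp add: sum.If_cases)
  moreover have "(\<Sum>v\<in>UNIV. \<Sum>u\<in>nbhd P v. f u)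
      = (\<Sum>u\<in>UNIV. \<Sum>v\<in>UNIV. if u \<in> nbhd P v then f u else 0)"
    by (subst sum.swap) (simp add: sum.If_cases)
  ultimately show ?thesis by simp
qed

lemma reversible_sum_nbhd_abs_matpow_le:
  assumes "stochastic P" and "reversible P \<pi>" and \<pi>_pos: "\<And>v. \<pi> v > 0"
  shows "(\<Sum>v\<in>UNIV. \<Sum>u\<in>nbhd P v. \<bar>matpow P t u w - \<pi> w\<bar>)
    \<le> real (max_degree P) * (\<pi> w / pi_min \<pi>) * l1_dist_stationary P \<pi> t w"
proof -
  have "real (card (nbhd P u)) * \<bar>matpow P t u w - \<pi> w\<bar>
      \<le> real (max_degree P) * (\<pi> w / pi_min \<pi> * \<bar>matpow P t w u - \<pi> u\<bar>)" for u
  proof -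
    have "\<pi> w / \<pi> u \<le> \<pi> w / pi_min \<pi>"
      using pi_min_le[of \<pi> u] pi_min_pos[of \<pi>, OF \<pi>_pos] \<pi>_pos[of w] \<pi>_pos[of u]
      by (intro divide_left_mono) simp_all
    then have "\<bar>matpow P t u w - \<pi> w\<bar> \<le> \<pi> w / pi_min \<pi> * \<bar>matpow P t w u - \<pi> u\<bar>"
      unfolding reversible_abs_matpow_centered[OF assms(2,3), of t u w]
      by (rule mult_right_mono) simp
    then show ?thesis
      by (intro mult_mono) (simp_all add: card_nbhd_le_max_degree)
  qed
  then have "(\<Sum>u\<in>UNIV. real (card (nbhd P u)) * \<bar>matpow P t u w - \<pi> w\<bar>)
      \<le> (\<Sum>u\<in>UNIV. real (max_degree P) * (\<pi> w / pi_min \<pi> * \<bar>matpow P t w u - \<pi> u\<bar>))"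
    by (rule sum_mono)
  then show ?thesis
    unfolding reversible_sum_nbhd_eq[OF assms] l1_dist_stationary_def
    by (simp add: sum_distrib_left mult.assoc)
qed

text \<open>Since \<open>\<infinity> * 0 = 0\<close> in \<open>ereal\<close>, the case \<open>M = \<infinity>\<close>, \<open>c = 0\<close> needs \<open>x = 0\<close>.\<close>

lemma ereal_abs_le_weighted_sum:
  fixes e b :: "'i \<Rightarrow> real"
  assumes "finite A" and x: "\<bar>x\<bar> \<le> (\<Sum>i\<in>A. \<bar>e i\<bar> * b i)"
    and b_nonneg: "\<And>i. i \<in> A \<Longrightarrow> 0 \<le> b i" and b_sum: "(\<Sum>i\<in>A. b i) \<le> c"
    and e: "\<And>i. i \<in> A \<Longrightarrow> ereal \<bar>e i\<bar> \<le> M" and "0 \<le> M"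
  shows "ereal \<bar>x\<bar> \<le> M * ereal c"
proof (cases M)
  case (real m)
  have "(\<Sum>i\<in>A. \<bar>e i\<bar> * b i) \<le> (\<Sum>i\<in>A. m * b i)"
    using e b_nonneg real by (intro sum_mono mult_right_mono) auto
  with x have "\<bar>x\<bar> \<le> (\<Sum>i\<in>A. m * b i)" by linarith
  also have "\<dots> \<le> m * c"
    using b_sum \<open>0 \<le> M\<close> real by (simp add: sum_distrib_left[symmetric] mult_left_mono)
  finally show ?thesis using real by simp
next
  case PInf
  show ?thesis
  proof (cases "c > 0")
    case False
    have "0 \<le> (\<Sum>i\<in>A. b i)" using b_nonneg by (simp add: sum_nonneg)
    then have "\<forall>i\<in>A. b i = 0"
      using False b_sum b_nonneg \<open>finite A\<close> by (subst sum_nonneg_eq_0_iff[symmetric]) auto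
    moreover have "c = 0" using False \<open>0 \<le> (\<Sum>i\<in>A. b i)\<close> b_sum by linarith
    ultimately show ?thesis using x PInf by simp
  qed (use PInf in simp)
qed (use \<open>0 \<le> M\<close> in simp)

lemma reversible_sum_nbhd_abs_matpow_le_mixing_time:
  assumes "stochastic P" and "ergodic P" and "stationary_distribution P \<pi>" and "reversible P \<pi>"
    and "0 < \<gamma>" and "\<gamma> < 1/2"
  shows "(\<Sum>s<T. \<Sum>v\<in>UNIV. \<Sum>u\<in>nbhd P v. \<bar>matpow P (T - Suc s) u w - \<pi> w\<bar>)
    \<le> 2 * (1 - \<gamma>) / (1 - 2 * \<gamma>) * real (mixing_time P \<pi> \<gamma>) * (\<pi> w / pi_min \<pi>)
        * real (max_degree P)"
proof -
  have \<pi>_pos: "\<pi> v > 0" for v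
    using stationary_pos assms(1-3) unfolding ergodic_def by blast
  have "(\<Sum>s<T. \<Sum>v\<in>UNIV. \<Sum>u\<in>nbhd P v. \<bar>matpow P (T - Suc s) u w - \<pi> w\<bar>)
      = (\<Sum>t<T. \<Sum>v\<in>UNIV. \<Sum>u\<in>nbhd P v. \<bar>matpow P t u w - \<pi> w\<bar>)"
    by (rule sum.nat_diff_reindex)
  also have "\<dots> \<le> (\<Sum>t<T. real (max_degree P) * (\<pi> w / pi_min \<pi>) * l1_dist_stationary P \<pi> t w)"
    by (intro sum_mono reversible_sum_nbhd_abs_matpow_le assms(1,4) \<pi>_pos)
  also have "\<dots> \<le> real (max_degree P) * (\<pi> w / pi_min \<pi>)
      * (2 * real (mixing_time P \<pi> \<gamma>) * (1 - \<gamma>) / (1 - 2 * \<gamma>))"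
    unfolding sum_distrib_left[symmetric]
    using \<pi>_pos[of w] pi_min_pos[of \<pi>, OF \<pi>_pos]
    by (intro mult_left_mono sum_l1_dist_stationary_le assms(1-3,5,6)) simp
  finally show ?thesis by (simp add: field_simps)
qed

theorem theorem3p1:
  fixes P :: "'v::finite \<Rightarrow> 'v \<Rightarrow> real" and \<pi> :: "'v \<Rightarrow> real"
    and \<sigma> :: "'v \<Rightarrow> nat \<Rightarrow> 'v" and \<chi>0 :: "'v \<Rightarrow> nat"
    and w :: 'v and T :: nat and \<gamma> :: real
  assumes "stochastic P" and "ergodic P" and "stationary_distribution P \<pi>"
    and "reversible P \<pi>"
    and "\<And>v j. \<sigma> v j \<in> nbhd P v"
    and "0 < \<gamma>" and "\<gamma> < 1/2"
  shows "ereal \<bar>real (chi \<sigma> \<chi>0 T w) - mu P \<chi>0 T w\<bar>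
    \<le> Psi P \<sigma> \<chi>0 * ereal (2 * (1 - \<gamma>) / (1 - 2 * \<gamma>) * real (mixing_time P \<pi> \<gamma>)
        * (\<pi> w / pi_min \<pi>) * real (max_degree P))"
proof -
  define e where "e = (\<lambda>(s, v, u). routing_error P \<sigma> \<chi>0 s v u)"
  define b where "b = (\<lambda>(s, v, u). if u \<in> nbhd P v then \<bar>matpow P (T - Suc s) u w - \<pi> w\<bar> else 0)"
  define A where "A = {..<T} \<times> (UNIV :: 'v set) \<times> (UNIV :: 'v set)"
  have "\<bar>real (chi \<sigma> \<chi>0 T w) - mu P \<chi>0 T w\<bar> \<le> (\<Sum>i\<in>A. \<bar>e i\<bar> * b i)"
    using abs_chi_minus_mu_le[of P \<sigma>, OF assms(1,5), where q = "\<pi> w"]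
    unfolding A_def sum.cartesian_product' b_def e_def by (simp add: sum.If_cases if_distrib)
  moreover have "(\<Sum>i\<in>A. b i) \<le> 2 * (1 - \<gamma>) / (1 - 2 * \<gamma>) * real (mixing_time P \<pi> \<gamma>)
        * (\<pi> w / pi_min \<pi>) * real (max_degree P)"
    using reversible_sum_nbhd_abs_matpow_le_mixing_time[OF assms(1-4,6,7), of T w]
    unfolding A_def sum.cartesian_product' b_def by (simp add: sum.If_cases)
  moreover have "ereal \<bar>e (s, v, u)\<bar> \<le> Psi P \<sigma> \<chi>0" for s v u
    using abs_routing_error_le_Psi[of u P v \<sigma> \<chi>0 s] Psi_nonneg[OF assms(1)]
      routing_error_outside_nbhd[OF assms(1), of \<sigma> v u] assms(5)
    by (cases "u \<in> nbhd P v") (simp_all add: e_def zero_ereal_def)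
  ultimately show ?thesis
    using Psi_nonneg[OF assms(1)]
    by (intro ereal_abs_le_weighted_sum[where e = e and b = b]) (auto simp: A_def b_def)
qed

end
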